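(* Let $T$ be a rooted binary tree with black/white-coloured leaves and the induced node colouring and classification as described in the context. No SPR operation on $T$ belonging to the class $(\mathrm{W},\mathrm{r},\mathrm{B},\mathrm{b})$ produces a compatible tree.
   Context: All trees are rooted binary trees; every non-leaf node has exactly two children and every non-root node $n$ has a parent $\mathrm{pa}(n)$. A "subtree" always means a node together with all of its descendants. Colouring: each leaf is coloured black (B) or white (W); an internal node is black if both children are black, white if both children are white, and grey (G) otherwise. A subtree is black (resp. white) if all its nodes are black (resp. white); it is maximal if no strictly larger subtree containing it is black (resp. white). Classification: a black or white node is of type "r" if it is the root of a maximal subtree of its own colour, and of type "b" otherwise; all grey nodes are of type "b" by convention. A tree is compatible if it contains at most one maximal black subtree. SPR operation $(u,v)$ on $T$: $u$ is a non-root node, $v$ is a node with $v\notin\{u,\mathrm{pa}(u)\}$ and $v$ not a descendant of $u$; the subtree rooted at $u$ is pruned (the edge to $u$ is removed and $\mathrm{pa}(u)$ deleted, its other child taking its place), then regrafted by inserting a new node on the edge from $v$ to its parent (or as a new root above $v$ if $v$ is the root) whose two children are $v$ and $u$; colours of the resulting tree are recomputed by the same rule. The operation belongs to class $(x,y,z,w)$ where $x,z\in\{\mathrm{B},\mathrm{W},\mathrm{G}\}$ are the colours in $T$ of $u$ and $v$, and $y,w\in\{\mathrm{r},\mathrm{b}\}$ their classifications in $T$. *)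

theory Defs
  imports Main "HOL-Library.Sublist"
begin

text \<open>Rooted binary trees whose leaves are coloured black or white.
  Nodes are addressed by positions: paths from the root
  (False = left child, True = right child).\<close>

datatype leafcol = LBlack | LWhite

datatype tree = Leaf leafcol | Node tree tree

datatype colour = B | W | G

datatype cls = R | Bc

fun tcolour :: "tree \<Rightarrow> colour" where
  "tcolour (Leaf LBlack) = B"
| "tcolour (Leaf LWhite) = W"
| "tcolour (Node l r) =
     (if tcolour l = B \<and> tcolour r = B then B
      else if tcolour l = W \<and> tcolour r = W then W else G)"

fun positions :: "tree \<Rightarrow> bool list set" where
  "positions (Leaf c) = {[]}"
| "positions (Node l r) =
     insert [] ((Cons False) ` positions l \<union> (Cons True) ` positions r)"

text \<open>Subtree rooted at a position (junk value outside positions).\<close>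
fun sub :: "tree \<Rightarrow> bool list \<Rightarrow> tree" where
  "sub t [] = t"
| "sub (Node l r) (b # p) = sub (if b then r else l) p"
| "sub (Leaf c) (b # p) = Leaf c"

definition node_colour :: "tree \<Rightarrow> bool list \<Rightarrow> colour" where
  "node_colour t p = tcolour (sub t p)"

definition mono_subtree :: "colour \<Rightarrow> tree \<Rightarrow> bool list \<Rightarrow> bool" where
  "mono_subtree c t p \<longleftrightarrow> p \<in> positions t \<and>
     (\<forall>q. p @ q \<in> positions t \<longrightarrow> node_colour t (p @ q) = c)"

definition maximal_mono :: "colour \<Rightarrow> tree \<Rightarrow> bool list \<Rightarrow> bool" where
  "maximal_mono c t p \<longleftrightarrow> mono_subtree c t p \<and>
     (\<forall>p'. strict_prefix p' p \<longrightarrow> \<not> mono_subtree c t p')"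

definition classification :: "tree \<Rightarrow> bool list \<Rightarrow> cls" where
  "classification t p =
     (if node_colour t p \<noteq> G \<and> maximal_mono (node_colour t p) t p then R else Bc)"

definition compatible :: "tree \<Rightarrow> bool" where
  "compatible t \<longleftrightarrow> card {p. maximal_mono B t p} \<le> 1"

text \<open>Pruning the subtree at a non-root position u: the parent of u is
  deleted and the sibling of u takes its place.\<close>
fun prune :: "tree \<Rightarrow> bool list \<Rightarrow> tree" where
  "prune (Node l r) [b] = (if b then l else r)"
| "prune (Node l r) (b # c # p) =
     (if b then Node l (prune r (c # p)) else Node (prune l (c # p)) r)"
| "prune t p = t"

text \<open>Regrafting s above the node at position v: a new node is inserted on
  the edge from v to its parent (or as new root), with children v and s.\<close>
fun graft :: "tree \<Rightarrow> bool list \<Rightarrow> tree \<Rightarrow> tree" where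
  "graft t [] s = Node t s"
| "graft (Node l r) (b # p) s =
     (if b then Node l (graft r p s) else Node (graft l p s) r)"
| "graft (Leaf c) (b # p) s = Leaf c"

text \<open>Position of node v (not in the subtree of u, not the parent of u)
  in the tree obtained by pruning u.\<close>
definition relocate :: "bool list \<Rightarrow> bool list \<Rightarrow> bool list" where
  "relocate u v =
     (let q = butlast u; b = last u in
      if prefix (q @ [\<not> b]) v then q @ drop (length q + 1) v else v)"

definition spr_valid :: "tree \<Rightarrow> bool list \<Rightarrow> bool list \<Rightarrow> bool" where
  "spr_valid t u v \<longleftrightarrow> u \<in> positions t \<and> u \<noteq> [] \<and> v \<in> positions t \<and>
     v \<noteq> u \<and> v \<noteq> butlast u \<and> \<not> prefix u v"

definition spr :: "tree \<Rightarrow> bool list \<Rightarrow> bool list \<Rightarrow> tree" where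
  "spr t u v = graft (prune t u) (relocate u v) (sub t u)"

end

theory Submission
  imports Defs
begin

text \<open>Since v is black but not the root of a maximal black subtree, its parent p is black,
  so both children of p are black. The white subtree at u lies neither below p nor above v,
  so pruning it leaves the subtree at p intact. Regrafting it above v makes every ancestor
  of the new node non-black, while v and its former sibling stay black: both become roots
  of maximal black subtrees.\<close>

lemma Nil_in_positions [simp]: "[] \<in> positions t"
  by (cases t) auto

lemma finite_positions: "finite (positions t)"
  by (induction t) auto

lemma sub_append: "sub t (p @ q) = sub (sub t p) q"
proof (induction t p rule: sub.induct)
  case (3 c b p)
  then show ?case by (cases q) auto
qed auto

lemma append_in_positions_iff:
  "p @ q \<in> positions t \<longleftrightarrow> p \<in> positions t \<and> q \<in> positions (sub t p)"
  by (induction t p rule: sub.induct) auto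

lemma tcolour_sub_black: "tcolour t = B \<Longrightarrow> q \<in> positions t \<Longrightarrow> tcolour (sub t q) = B"
  by (induction t arbitrary: q) (auto split: if_splits)

lemma mono_subtree_B_iff: "mono_subtree B t p \<longleftrightarrow> p \<in> positions t \<and> tcolour (sub t p) = B"
  unfolding mono_subtree_def node_colour_def
  by (metis append_Nil2 append_in_positions_iff sub_append tcolour_sub_black)

lemma parent_black_if_not_maximal:
  assumes "mono_subtree B t v" and "\<not> maximal_mono B t v"
  shows "v \<noteq> [] \<and> tcolour (sub t (butlast v)) = B"
proof -
  obtain p' where "strict_prefix p' v" and p': "mono_subtree B t p'"
    using assms unfolding maximal_mono_def by blast
  then have "v \<noteq> []" and "prefix p' (butlast v)"
    by (auto simp: strict_prefix_def)
      (metis append_butlast_last_id prefix_snoc prefix_bot.extremum_uniqueI)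
  moreover have "butlast v \<in> positions t"
    using assms(1) \<open>v \<noteq> []\<close> append_in_positions_iff
    by (metis mono_subtree_B_iff append_butlast_last_id)
  ultimately show ?thesis
    using p' by (auto simp: mono_subtree_def node_colour_def elim!: prefixE)
qed

lemma not_compatible_if_two_maximal:
  assumes "maximal_mono B t p" and "maximal_mono B t q" and "p \<noteq> q"
  shows "\<not> compatible t"
proof -
  have "finite {p. maximal_mono B t p}"
    by (rule finite_subset[OF _ finite_positions])
      (auto simp: maximal_mono_def mono_subtree_def)
  then have "card {p, q} \<le> card {p. maximal_mono B t p}"
    using assms(1,2) by (intro card_mono) auto
  then show ?thesis
    using assms(3) by (simp add: compatible_def)
qed

lemma relocate_Cons_same: "u \<noteq> [] \<Longrightarrow> relocate (c # u) (c # w) = c # relocate u w"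
  by (auto simp: relocate_def Let_def)

lemma relocate_Cons_diff: "c \<noteq> b \<Longrightarrow> u \<noteq> [] \<Longrightarrow> relocate (b # u) (c # w) = c # w"
  by (auto simp: relocate_def Let_def)

lemma relocate_singleton: "relocate [b] (c # w) = (if c = b then c # w else w)"
  by (auto simp: relocate_def Let_def)

lemma relocate_append:
  assumes "u \<noteq> []" and "\<not> prefix w u"
  shows "relocate u (w @ z) = relocate u w @ z"
proof -
  obtain q b where u: "u = q @ [b]"
    using assms(1) by (metis snoc_eq_iff_butlast)
  show ?thesis
  proof (cases "prefix (q @ [\<not> b]) w")
    case True
    then obtain y where "w = q @ [\<not> b] @ y" by (auto simp: prefix_def)
    then show ?thesis using u by (simp add: relocate_def Let_def)
  next
    case False
    have "\<not> prefix (q @ [\<not> b]) (w @ z)"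
    proof
      assume "prefix (q @ [\<not> b]) (w @ z)"
      with False have "prefix w q"
        by (metis prefix_append prefix_snoc prefix_order.dual_order.eq_iff)
      then show False
        using assms(2) u by (metis prefix_append)
    qed
    then show ?thesis
      using False u by (simp add: relocate_def Let_def)
  qed
qed

lemma sub_prune_relocate:
  "u \<in> positions t \<Longrightarrow> u \<noteq> [] \<Longrightarrow> w \<in> positions t \<Longrightarrow> \<not> prefix w u \<Longrightarrow> \<not> prefix u w \<Longrightarrow>
     relocate u w \<in> positions (prune t u) \<and> sub (prune t u) (relocate u w) = sub t w"
proof (induction u arbitrary: t w)
  case Nil
  then show ?case by simp
next
  case (Cons b u')
  then obtain l r where t: "t = Node l r" by (cases t) auto
  obtain c w' where w: "w = c # w'" using Cons.prems by (cases w) auto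
  show ?case
  proof (cases u')
    case Nil
    then show ?thesis using Cons.prems t w by (auto simp: relocate_singleton)
  next
    case (Cons d u'')
    then show ?thesis
      using Cons.IH[of "if b then r else l" w'] Cons.prems t w
      by (cases "c = b") (auto simp: relocate_Cons_same relocate_Cons_diff)
  qed
qed

lemma sub_graft_prefix:
  "p @ q \<in> positions t \<Longrightarrow>
     p \<in> positions (graft t (p @ q) s) \<and> sub (graft t (p @ q) s) p = graft (sub t p) q s"
  by (induction t p rule: sub.induct) auto

lemma tcolour_graft_not_black:
  "q \<in> positions t \<Longrightarrow> tcolour s \<noteq> B \<Longrightarrow> tcolour (graft t q s) \<noteq> B"
  by (induction t q s rule: graft.induct) auto

lemma ancestors_of_graft_not_black:
  assumes "q \<in> positions t" and "tcolour s \<noteq> B" and "prefix p q"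
  shows "\<not> mono_subtree B (graft t q s) p"
proof -
  obtain z where q: "q = p @ z"
    using assms(3) by (rule prefixE)
  then have "z \<in> positions (sub t p)"
    using assms(1) append_in_positions_iff by blast
  then show ?thesis
    using sub_graft_prefix[of p z t s] assms(1,2) q tcolour_graft_not_black
    by (simp add: mono_subtree_B_iff)
qed

lemma graft_below_black_node:
  assumes r: "r \<in> positions t" and sub_r: "sub t r = Node l1 l2"
    and black: "tcolour l1 = B" "tcolour l2 = B" and s: "tcolour s \<noteq> B"
  shows "maximal_mono B (graft t (r @ [b]) s) (r @ [b, False])"
    and "maximal_mono B (graft t (r @ [b]) s) (r @ [\<not> b])"
proof -
  let ?T = "graft t (r @ [b]) s"
  have rb: "r @ [b] \<in> positions t"
    using r sub_r append_in_positions_iff by auto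
  have rT: "r \<in> positions ?T" and sub_rT: "sub ?T r = graft (Node l1 l2) [b] s"
    using sub_graft_prefix[OF rb, of s] sub_r by auto
  have "[b, False] \<in> positions (sub ?T r)" "tcolour (sub (sub ?T r) [b, False]) = B"
    using sub_rT black by auto
  then have "mono_subtree B ?T (r @ [b, False])"
    using rT by (simp add: mono_subtree_B_iff append_in_positions_iff sub_append)
  moreover have "prefix p (r @ [b])" if "strict_prefix p (r @ [b, False])" for p
    using that by (metis append.assoc append_Cons append_Nil prefix_snoc strict_prefix_def)
  ultimately show "maximal_mono B ?T (r @ [b, False])"
    using ancestors_of_graft_not_black[OF rb s] unfolding maximal_mono_def by blast
  have "[\<not> b] \<in> positions (sub ?T r)" "tcolour (sub (sub ?T r) [\<not> b]) = B"
    using sub_rT black by auto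
  then have "mono_subtree B ?T (r @ [\<not> b])"
    using rT by (simp add: mono_subtree_B_iff append_in_positions_iff sub_append)
  moreover have "prefix p (r @ [b])" if "strict_prefix p (r @ [\<not> b])" for p
    using that by (metis prefix_snoc strict_prefix_def prefix_append)
  ultimately show "maximal_mono B ?T (r @ [\<not> b])"
    using ancestors_of_graft_not_black[OF rb s] unfolding maximal_mono_def by blast
qed

theorem lemma3:
  fixes t :: tree and u v :: "bool list"
  assumes "spr_valid t u v"
    and "node_colour t u = W" and "classification t u = R"
    and "node_colour t v = B" and "classification t v = Bc"
  shows "\<not> compatible (spr t u v)"
proof -
  have u: "u \<in> positions t" "u \<noteq> []" and v: "v \<in> positions t" "\<not> prefix u v"
    and u_not_black: "tcolour (sub t u) \<noteq> B"
    using assms(1,2) by (auto simp: spr_valid_def node_colour_def)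
  have "mono_subtree B t v" and "\<not> maximal_mono B t v"
    using v assms(4,5) by (auto simp: mono_subtree_B_iff node_colour_def classification_def)
  then obtain p b where pb: "v = p @ [b]" and p_black: "tcolour (sub t p) = B"
    using parent_black_if_not_maximal by (metis snoc_eq_iff_butlast)
  then obtain l1 l2 where sub_p: "sub t p = Node l1 l2"
    and l1: "tcolour l1 = B" and l2: "tcolour l2 = B"
    using v(1) append_in_positions_iff
    by (cases "sub t p") (auto split: if_splits)
  have p: "p \<in> positions t"
    using v(1) pb append_in_positions_iff by blast
  have p_u: "\<not> prefix p u"
    using u p_black u_not_black tcolour_sub_black append_in_positions_iff sub_append
    by (metis prefixE)
  moreover have "\<not> prefix u p"
    using v(2) pb by (metis prefix_snoc)
  ultimately have "relocate u p \<in> positions (prune t u)"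
    and "sub (prune t u) (relocate u p) = Node l1 l2"
    using sub_prune_relocate[OF u p] sub_p by auto
  note maximal = graft_below_black_node[OF this l1 l2 u_not_black, of b]
  have "spr t u v = graft (prune t u) (relocate u p @ [b]) (sub t u)"
    using relocate_append[OF u(2) p_u] pb by (simp add: spr_def)
  then show ?thesis
    using not_compatible_if_two_maximal[OF maximal] by simp
qed

end
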